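(* If $S$ is an infinite meet-semilattice, then the lattice $Sub_\wedge(S)$ of meet-subsemilattices of $S$ (ordered by inclusion) contains a chain isomorphic to $\mathbb{Q}$. Consequently, $Sub_\wedge(S)$ is order-scattered if and only if $S$ is finite.
   Context: A poset is order-scattered if it contains no subset order-isomorphic to the chain $\mathbb{Q}$ of rationals. *)

theory Defs
  imports Complex_Main
begin

text \<open>Meet-subsemilattices of a meet-semilattice (the whole type 'a), i.e. subsets
closed under binary meet. The empty set is included.\<close>
definition meet_subsemilattices :: "('a::semilattice_inf) set set" where
  "meet_subsemilattices = {A. \<forall>x\<in>A. \<forall>y\<in>A. inf x y \<in> A}"

definition contains_copy_of_rat :: "('b::order) set \<Rightarrow> bool" where
  "contains_copy_of_rat P \<longleftrightarrow>
     (\<exists>f :: rat \<Rightarrow> 'b. range f \<subseteq> P \<and> (\<forall>x y. f x \<le> f y \<longleftrightarrow> x \<le> y))"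

definition order_scattered :: "('b::order) set \<Rightarrow> bool" where
  "order_scattered P \<longleftrightarrow> \<not> contains_copy_of_rat P"

end

theory Submission
  imports Defs "HOL-Library.Ramsey" "HOL-Library.Countable"
begin

text \<open>By Ramsey's theorem an infinite meet-semilattice contains an infinite chain or an
infinite antichain C. Either way the subsets of C embed into the meet-subsemilattices:
subsets of a chain are already meet-closed, and for an antichain the meet closure of A
meets C exactly in A. Since C is infinite, the initial segments of the rationals,
transported into C, then give a copy of \<rat>. Conversely a finite type has only finitely
many subsets, which leaves no room for \<rat>.\<close>

lemma infinite_chain_or_antichain:
  fixes S :: "'a::order set"
  assumes "infinite S"
  obtains C where "C \<subseteq> S" "infinite C"
    "(\<forall>x\<in>C. \<forall>y\<in>C. x \<le> y \<or> y \<le> x) \<or> (\<forall>x\<in>C. \<forall>y\<in>C. x \<le> y \<longrightarrow> x = y)"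
proof -
  define comparable :: "'a set \<Rightarrow> nat" where
    "comparable X = (if \<exists>x\<in>X. \<exists>y\<in>X. x < y then 0 else 1)" for X
  have "\<forall>x\<in>S. \<forall>y\<in>S. x \<noteq> y \<longrightarrow> comparable {x, y} < 2"
    by (simp add: comparable_def)
  from Ramsey2[OF assms this] obtain C t where C: "C \<subseteq> S" "infinite C" "t < 2"
    and homogeneous: "\<forall>x\<in>C. \<forall>y\<in>C. x \<noteq> y \<longrightarrow> comparable {x, y} = t"
    by blast
  have "(\<forall>x\<in>C. \<forall>y\<in>C. x \<le> y \<or> y \<le> x) \<or> (\<forall>x\<in>C. \<forall>y\<in>C. x \<le> y \<longrightarrow> x = y)"
  proof (cases "t = 0")
    case True
    have "x \<le> y \<or> y \<le> x" if "x \<in> C" "y \<in> C" for x y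
    proof (cases "x = y")
      case False
      with homogeneous that True have "comparable {x, y} = 0" by blast
      then show ?thesis unfolding comparable_def by (auto split: if_splits)
    qed simp
    then show ?thesis by blast
  next
    case False
    have "x = y" if "x \<in> C" "y \<in> C" "x \<le> y" for x y
    proof (rule ccontr)
      assume "x \<noteq> y"
      with homogeneous that have "comparable {x, y} = t" by blast
      moreover from \<open>x \<noteq> y\<close> \<open>x \<le> y\<close> have "comparable {x, y} = 0"
        unfolding comparable_def by auto
      ultimately show False using False by simp
    qed
    then show ?thesis by blast
  qed
  with C that show ?thesis by blast
qed

lemma contains_copy_of_rat_infinite:
  assumes "contains_copy_of_rat P"
  shows "infinite P"
proof
  assume "finite P"
  from assms obtain f :: "rat \<Rightarrow> 'a" where "range f \<subseteq> P" and f: "\<forall>x y. f x \<le> f y \<longleftrightarrow> x \<le> y"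
    unfolding contains_copy_of_rat_def by blast
  have "inj f" by (rule injI) (metis f order_antisym order_refl)
  with finite_subset[OF \<open>range f \<subseteq> P\<close> \<open>finite P\<close>] have "finite (UNIV :: rat set)"
    by (rule finite_imageD)
  then show False by (simp add: infinite_UNIV_char_0)
qed

text \<open>q is sent to the image, under an injection h of \<rat> into C, of the set of rationals below q;
density of \<rat> makes this strictly monotone.\<close>

lemma contains_copy_of_rat_if_Pow_embeds:
  fixes F :: "'a set \<Rightarrow> 'b::order"
  assumes "infinite C"
    and into: "\<And>A. A \<subseteq> C \<Longrightarrow> F A \<in> P"
    and embed: "\<And>A B. A \<subseteq> C \<Longrightarrow> B \<subseteq> C \<Longrightarrow> F A \<le> F B \<longleftrightarrow> A \<subseteq> B"
  shows "contains_copy_of_rat P"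
proof -
  obtain g :: "nat \<Rightarrow> 'a" where "inj g" "range g \<subseteq> C"
    using infinite_countable_subset assms(1) by blast
  define h :: "rat \<Rightarrow> 'a" where "h = g \<circ> to_nat"
  have "inj h" unfolding h_def using \<open>inj g\<close> by (simp add: inj_compose)
  have h_C: "h ` A \<subseteq> C" for A using \<open>range g \<subseteq> C\<close> unfolding h_def by auto
  have "F (h ` {r. r < x}) \<le> F (h ` {r. r < y}) \<longleftrightarrow> x \<le> y" for x y
  proof -
    have "F (h ` {r. r < x}) \<le> F (h ` {r. r < y}) \<longleftrightarrow> {r. r < x} \<subseteq> {r. r < y}"
      using embed[OF h_C h_C] inj_image_subset_iff[OF \<open>inj h\<close>] by simp
    also have "\<dots> \<longleftrightarrow> x \<le> y"
      by (auto simp: subset_eq) (meson linorder_not_le order_less_irrefl)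
    finally show ?thesis .
  qed
  moreover have "range (\<lambda>q. F (h ` {r. r < q})) \<subseteq> P" using into h_C by auto
  ultimately show ?thesis
    unfolding contains_copy_of_rat_def by (intro exI[of _ "\<lambda>q. F (h ` {r. r < q})"]) simp
qed

lemma chain_subset_in_meet_subsemilattices:
  assumes "\<forall>x\<in>A. \<forall>y\<in>A. x \<le> y \<or> y \<le> x"
  shows "A \<in> meet_subsemilattices"
  unfolding meet_subsemilattices_def
proof (intro CollectI ballI)
  fix x y assume "x \<in> A" "y \<in> A"
  with assms have "x \<le> y \<or> y \<le> x" by blast
  then have "inf x y = x \<or> inf x y = y" by (metis inf_absorb1 inf_absorb2)
  with \<open>x \<in> A\<close> \<open>y \<in> A\<close> show "inf x y \<in> A" by auto
qed

definition meet_closure :: "'a::semilattice_inf set \<Rightarrow> 'a set" where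
  "meet_closure A = {Inf_fin X | X. finite X \<and> X \<noteq> {} \<and> X \<subseteq> A}"

lemma meet_closure_in_meet_subsemilattices: "meet_closure A \<in> meet_subsemilattices"
  unfolding meet_subsemilattices_def meet_closure_def
proof clarify
  fix X Y :: "'a set"
  assume "finite X" "X \<noteq> {}" "X \<subseteq> A" "finite Y" "Y \<noteq> {}" "Y \<subseteq> A"
  then show "\<exists>Z. inf (Inf_fin X) (Inf_fin Y) = Inf_fin Z \<and> finite Z \<and> Z \<noteq> {} \<and> Z \<subseteq> A"
    by (intro exI[of _ "X \<union> Y"]) (auto simp: Inf_fin.union)
qed

lemma meet_closure_mono: "A \<subseteq> B \<Longrightarrow> meet_closure A \<subseteq> meet_closure B"
  unfolding meet_closure_def by blast

lemma meet_closure_Int_antichain: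
  assumes antichain: "\<forall>x\<in>C. \<forall>y\<in>C. x \<le> y \<longrightarrow> x = y" and "A \<subseteq> C"
  shows "meet_closure A \<inter> C = A"
proof
  show "A \<subseteq> meet_closure A \<inter> C"
    using \<open>A \<subseteq> C\<close> unfolding meet_closure_def by (auto intro!: exI[of _ "{_}"])
next
  show "meet_closure A \<inter> C \<subseteq> A"
  proof
    fix x assume "x \<in> meet_closure A \<inter> C"
    then obtain X where X: "finite X" "X \<subseteq> A" "x = Inf_fin X" "x \<in> C" and "X \<noteq> {}"
      unfolding meet_closure_def by auto
    then obtain y where "y \<in> X" by auto
    with X have "x \<le> y" by (simp add: Inf_fin.coboundedI)
    moreover from X \<open>y \<in> X\<close> \<open>A \<subseteq> C\<close> have "y \<in> C" by blast
    ultimately have "x = y" using antichain \<open>x \<in> C\<close> by blast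
    with X \<open>y \<in> X\<close> show "x \<in> A" by auto
  qed
qed

lemma meet_closure_subset_iff_antichain:
  assumes "\<forall>x\<in>C. \<forall>y\<in>C. x \<le> y \<longrightarrow> x = y" and "A \<subseteq> C" "B \<subseteq> C"
  shows "meet_closure A \<subseteq> meet_closure B \<longleftrightarrow> A \<subseteq> B"
proof
  assume "meet_closure A \<subseteq> meet_closure B"
  then have "meet_closure A \<inter> C \<subseteq> meet_closure B \<inter> C" by blast
  then show "A \<subseteq> B" by (simp add: meet_closure_Int_antichain assms)
qed (rule meet_closure_mono)

lemma infinite_contains_copy_of_rat_meet_subsemilattices:
  assumes "infinite (UNIV :: 'a::semilattice_inf set)"
  shows "contains_copy_of_rat (meet_subsemilattices :: 'a set set)"
proof -
  obtain C :: "'a set" where "C \<subseteq> UNIV" "infinite C"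
    and "(\<forall>x\<in>C. \<forall>y\<in>C. x \<le> y \<or> y \<le> x) \<or> (\<forall>x\<in>C. \<forall>y\<in>C. x \<le> y \<longrightarrow> x = y)"
    by (rule infinite_chain_or_antichain[OF assms])
  then consider (chain) "\<forall>x\<in>C. \<forall>y\<in>C. x \<le> y \<or> y \<le> x"
    | (antichain) "\<forall>x\<in>C. \<forall>y\<in>C. x \<le> y \<longrightarrow> x = y"
    by blast
  then show ?thesis
  proof cases
    case chain
    have "A \<in> meet_subsemilattices" if "A \<subseteq> C" for A
      using chain that by (intro chain_subset_in_meet_subsemilattices) blast
    then show ?thesis
      by (rule contains_copy_of_rat_if_Pow_embeds[OF \<open>infinite C\<close>, where F = id]) simp_all
  next
    case antichain
    show ?thesis
      by (rule contains_copy_of_rat_if_Pow_embeds[OF \<open>infinite C\<close>, where F = meet_closure])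
        (rule meet_closure_in_meet_subsemilattices, rule meet_closure_subset_iff_antichain[OF antichain])
  qed
qed

theorem theorem6p1:
  shows "(infinite (UNIV :: ('a::semilattice_inf) set) \<longrightarrow>
            contains_copy_of_rat (meet_subsemilattices :: 'a set set))
         \<and> (order_scattered (meet_subsemilattices :: 'a set set) \<longleftrightarrow> finite (UNIV :: 'a set))"
proof -
  have "\<not> contains_copy_of_rat (meet_subsemilattices :: 'a set set)"
    if "finite (UNIV :: 'a set)"
  proof -
    have "finite (UNIV :: 'a set set)" using that by (simp add: Finite_Set.finite_set)
    then have "finite (meet_subsemilattices :: 'a set set)" by (rule finite_subset[OF subset_UNIV])
    then show ?thesis using contains_copy_of_rat_infinite by blast
  qed
  with infinite_contains_copy_of_rat_meet_subsemilattices[where 'a = 'a] show ?thesis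
    unfolding order_scattered_def by blast
qed

end
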